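(* Let $d\ge 2$ and let $P\in\mathbb{C}[x_0,x_1,x_2]$ be a homogeneous polynomial (ternary form) of degree $d$ with $\mathrm{Cr}(P)\ge 2$. Then $\mathrm{r}(P)\le(\mathrm{Cr}(P)-1)d$.
   Context: The rank $\mathrm{r}(P)$ is the minimum $r$ such that $P=L_1^d+\cdots+L_r^d$ with $L_i$ linear forms. Let $\nu_d:\mathbb{P}^2\to\mathbb{P}^N$, $N=\binom{d+2}{2}-1$, be the degree $d$ Veronese embedding with image $X_{2,d}$, and $[P]$ the projective class of $P$. A zero-dimensional scheme is curvilinear if the Zariski tangent space at each point of its support has dimension $\le 1$. The curvilinear rank is $\mathrm{Cr}(P)=\min\{\deg(Z): Z\subset X_{2,d}$ zero-dimensional curvilinear with $[P]\in\langle Z\rangle\}$, $\langle Z\rangle$ being the linear span of $Z$. *)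

theory Defs
  imports Complex_Main "HOL-Computational_Algebra.Polynomial"
begin

type_synonym vec3 = "complex \<times> complex \<times> complex"

definition lin :: "vec3 \<Rightarrow> vec3 \<Rightarrow> complex" where
  "lin l x = (case l of (a0,a1,a2) \<Rightarrow> case x of (x0,x1,x2) \<Rightarrow> a0*x0 + a1*x1 + a2*x2)"

definition smul3 :: "complex \<Rightarrow> vec3 \<Rightarrow> vec3" where
  "smul3 c v = (case v of (a,b,e) \<Rightarrow> (c*a, c*b, c*e))"

definition add3 :: "vec3 \<Rightarrow> vec3 \<Rightarrow> vec3" where
  "add3 u v = (case u of (a,b,e) \<Rightarrow> case v of (a',b',e') \<Rightarrow> (a+a', b+b', e+e'))"

definition indep2 :: "vec3 \<Rightarrow> vec3 \<Rightarrow> bool" where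
  "indep2 u v \<longleftrightarrow> (\<forall>a b. add3 (smul3 a u) (smul3 b v) = (0,0,0) \<longrightarrow> a = 0 \<and> b = 0)"

definition is_ternary_form :: "nat \<Rightarrow> (vec3 \<Rightarrow> complex) \<Rightarrow> bool" where
  "is_ternary_form d P \<longleftrightarrow> (\<exists>c :: nat \<Rightarrow> nat \<Rightarrow> complex. \<forall>x0 x1 x2.
      P (x0,x1,x2) = (\<Sum>(a,b)\<in>{(a,b). a + b \<le> d}. c a b * x0^a * x1^b * x2^(d-a-b)))"

definition waring_rank :: "nat \<Rightarrow> (vec3 \<Rightarrow> complex) \<Rightarrow> nat" where
  "waring_rank d P = (LEAST r. \<exists>L :: nat \<Rightarrow> vec3. P = (\<lambda>x. \<Sum>i<r. (lin (L i) x)^d))"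

text \<open>A curvilinear scheme of length k supported at the point [l_0] of P^2 is the image of
  Spec C[t]/(t^k) under a germ t \<mapsto> [l_0 + t l_1 + ... + t^(k-1) l_(k-1)] with l_0 \<noteq> 0 and
  (if k \<ge> 2) l_0, l_1 linearly independent. The linear span of its image under \<nu>_d is spanned by
  the t^j-coefficients (j < k) of (l_0 + t l_1 + ...)^d, viewed as forms in x.\<close>
definition jet_form :: "nat \<Rightarrow> nat \<Rightarrow> (nat \<Rightarrow> vec3) \<Rightarrow> nat \<Rightarrow> vec3 \<Rightarrow> complex" where
  "jet_form d k l j = (\<lambda>x. coeff ((\<Sum>s<k. monom (lin (l s) x) s) ^ d) j)"

definition curvilinear_rank :: "nat \<Rightarrow> (vec3 \<Rightarrow> complex) \<Rightarrow> nat" where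
  "curvilinear_rank d P = (LEAST n. \<exists>(m::nat) (ks :: nat \<Rightarrow> nat) (l :: nat \<Rightarrow> nat \<Rightarrow> vec3)
       (c :: nat \<Rightarrow> nat \<Rightarrow> complex).
     (\<forall>i<m. ks i \<ge> 1 \<and> l i 0 \<noteq> (0,0,0) \<and> (ks i \<ge> 2 \<longrightarrow> indep2 (l i 0) (l i 1))) \<and>
     (\<forall>i<m. \<forall>i'<m. i \<noteq> i' \<longrightarrow> indep2 (l i 0) (l i' 0)) \<and>
     n = (\<Sum>i<m. ks i) \<and>
     P = (\<lambda>x. \<Sum>i<m. \<Sum>j<ks i. c i j * jet_form d (ks i) (l i) j x))"

end

theory Submission
  imports Defs "HOL-Computational_Algebra.Fundamental_Theorem_Algebra"
begin

text \<open>
  A curvilinear component of length k at [l_0] contributes the span of the coefficients of t^j,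
  j < k, in g(t) = (l_0 + t l_1 + ... + t^(k-1) l_(k-1))^d, a polynomial in t of degree at most
  D = (k - 1) d. A functional phi = sum_(j<k) c_j coeff_j with k <= D can be made to vanish on
  q = (t - b)^D - r^D for suitable b and r ~= 0. Interpolating g modulo q at the D distinct roots
  t_i of q then gives phi(g) = sum_i w_i g(t_i), and each g(t_i) is a d-th power of a linear form.
  So a component of length k >= 2 has Waring rank at most (k - 1) d, a reduced point has rank 1,
  and summing over the components with d >= 2 gives r(P) <= (Cr(P) - 1) d. The curvilinear rank
  is attained because every ternary form is a combination of d-th powers of the pairwise
  independent forms x_0 + s x_1 + u x_2, 0 <= s, u <= d.
\<close>

definition lagrange_basis :: "(nat \<Rightarrow> 'a::field) \<Rightarrow> nat \<Rightarrow> nat \<Rightarrow> 'a poly" where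
  "lagrange_basis t N i =
     smult (inverse (\<Prod>i'\<in>{..<N}-{i}. t i - t i')) (\<Prod>i'\<in>{..<N}-{i}. [:- t i', 1:])"

lemma degree_lagrange_basis:
  assumes "i < N"
  shows "degree (lagrange_basis t N i) < N"
proof -
  have "degree (\<Prod>i'\<in>{..<N}-{i}. [:- t i', 1:]) \<le> sum (degree \<circ> (\<lambda>i'. [:- t i', 1:])) ({..<N}-{i})"
    by (rule degree_prod_sum_le) simp
  also have "\<dots> = N - 1"
    using assms by simp
  finally show ?thesis
    unfolding lagrange_basis_def using assms degree_smult_le order.strict_trans1 by fastforce
qed

lemma poly_lagrange_basis:
  assumes "inj_on t {..<N}" "i < N" "i' < N"
  shows "poly (lagrange_basis t N i) (t i') = (if i' = i then 1 else 0)"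
proof -
  have "(\<Prod>i''\<in>{..<N}-{i}. t i - t i'') \<noteq> 0"
    using assms by (auto simp: inj_on_def)
  moreover have "(\<Prod>i''\<in>{..<N}-{i}. t i' - t i'') = 0" if "i' \<noteq> i"
    using assms that by (intro prod_zero) auto
  ultimately show ?thesis
    by (auto simp: lagrange_basis_def poly_prod)
qed

lemma lagrange_interpolation:
  fixes p :: "'a::field poly"
  assumes "inj_on t {..<N}" "degree p < N"
  shows "p = (\<Sum>i<N. smult (poly p (t i)) (lagrange_basis t N i))"
proof (rule poly_eqI_degree[where A = "t ` {..<N}"])
  have card: "card (t ` {..<N}) = N"
    using assms(1) by (simp add: card_image)
  show "card (t ` {..<N}) > degree p"
    using assms(2) card by simp
  show "card (t ` {..<N}) > degree (\<Sum>i<N. smult (poly p (t i)) (lagrange_basis t N i))"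
    unfolding card using assms(2)
    by (intro degree_sum_less) (auto intro: le_less_trans[OF degree_smult_le] degree_lagrange_basis)
  show "poly p x = poly (\<Sum>i<N. smult (poly p (t i)) (lagrange_basis t N i)) x"
    if "x \<in> t ` {..<N}" for x
    using that assms(1) by (auto simp: poly_sum poly_lagrange_basis if_distrib cong: if_cong)
qed

lemma lagrange_interpolation_modulo:
  fixes p q :: "'a::field poly"
  assumes "inj_on t {..<N}" "degree p \<le> N" "degree q \<le> N" "coeff q N = 1"
    and "\<And>i. i < N \<Longrightarrow> poly q (t i) = 0"
  shows "p = smult (coeff p N) q + (\<Sum>i<N. smult (poly p (t i)) (lagrange_basis t N i))"
proof (rule poly_eqI_degree_lead_coeff[where A = "t ` {..<N}" and n = N])
  have "coeff (lagrange_basis t N i) N = 0" if "i < N" for i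
    by (rule coeff_eq_0[OF degree_lagrange_basis[OF that]])
  then show "coeff p N = coeff (smult (coeff p N) q + (\<Sum>i<N. smult (poly p (t i)) (lagrange_basis t N i))) N"
    using assms(4) by (simp add: coeff_sum)
  show "card (t ` {..<N}) \<ge> N"
    using assms(1) by (simp add: card_image)
  show "degree p \<le> N" by fact
  show "degree (smult (coeff p N) q + (\<Sum>i<N. smult (poly p (t i)) (lagrange_basis t N i))) \<le> N"
    using assms(3)
    by (intro degree_add_le order.trans[OF degree_smult_le] degree_sum_le)
       (auto intro: order.trans[OF degree_smult_le] less_imp_le degree_lagrange_basis)
  show "poly p z = poly (smult (coeff p N) q + (\<Sum>i<N. smult (poly p (t i)) (lagrange_basis t N i))) z"
    if "z \<in> t ` {..<N}" for z
    using that assms(1,5) by (auto simp: poly_sum poly_lagrange_basis if_distrib cong: if_cong)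
qed

definition has_waring_decomposition :: "nat \<Rightarrow> nat \<Rightarrow> (vec3 \<Rightarrow> complex) \<Rightarrow> bool" where
  "has_waring_decomposition d r F \<longleftrightarrow> (\<exists>L. F = (\<lambda>x. \<Sum>i<r. lin (L i) x ^ d))"

lemma waring_rank_le:
  "has_waring_decomposition d r F \<Longrightarrow> waring_rank d F \<le> r"
  unfolding has_waring_decomposition_def waring_rank_def by (rule Least_le)

lemma lin_smul3: "lin (smul3 z v) x = z * lin v x"
  by (cases x; cases v) (simp add: lin_def smul3_def algebra_simps)

lemma has_waring_decomposition_scaled_power:
  assumes "d \<ge> 1"
  shows "has_waring_decomposition d 1 (\<lambda>x. w * lin v x ^ d)"
proof -
  obtain z :: complex where "z ^ d = w"
    using nth_root_exists[of d w] assms by auto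
  then show ?thesis
    unfolding has_waring_decomposition_def
    by (intro exI[of _ "\<lambda>_. smul3 z v"]) (simp add: lin_smul3 power_mult_distrib)
qed

lemma sum_lessThan_add:
  fixes f :: "nat \<Rightarrow> 'a::comm_monoid_add"
  shows "(\<Sum>i<r + s. f i) = (\<Sum>i<r. f i) + (\<Sum>i<s. f (r + i))"
  by (induction s) (simp_all add: add.assoc)

lemma has_waring_decomposition_add:
  assumes "has_waring_decomposition d r F" "has_waring_decomposition d s G"
  shows "has_waring_decomposition d (r + s) (\<lambda>x. F x + G x)"
proof -
  obtain L M where F: "F = (\<lambda>x. \<Sum>i<r. lin (L i) x ^ d)" and G: "G = (\<lambda>x. \<Sum>i<s. lin (M i) x ^ d)"
    using assms unfolding has_waring_decomposition_def by blast
  show ?thesis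
    unfolding has_waring_decomposition_def
    by (intro exI[of _ "\<lambda>i. if i < r then L i else M (i - r)"] ext) (simp add: sum_lessThan_add F G)
qed

lemma has_waring_decomposition_sum:
  fixes m :: nat
  assumes "\<And>i. i < m \<Longrightarrow> has_waring_decomposition d (r i) (F i)"
  shows "has_waring_decomposition d (\<Sum>i<m. r i) (\<lambda>x. \<Sum>i<m. F i x)"
  using assms
proof (induction m)
  case 0
  then show ?case by (simp add: has_waring_decomposition_def)
next
  case (Suc m)
  then show ?case using has_waring_decomposition_add[of d "\<Sum>i<m. r i" _ "r m" "F m"] by simp
qed

lemma has_waring_decomposition_linear_combination:
  "d \<ge> 1 \<Longrightarrow> has_waring_decomposition d N (\<lambda>x. \<Sum>i<N. w i * lin (v i) x ^ d)"
  using has_waring_decomposition_sum[of N d "\<lambda>_. 1" "\<lambda>i x. w i * lin (v i) x ^ d"]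
    has_waring_decomposition_scaled_power by simp

definition jet_point :: "nat \<Rightarrow> (nat \<Rightarrow> vec3) \<Rightarrow> complex \<Rightarrow> vec3" where
  "jet_point k l t =
     ((\<Sum>s<k. t ^ s * fst (l s)), (\<Sum>s<k. t ^ s * fst (snd (l s))), (\<Sum>s<k. t ^ s * snd (snd (l s))))"

lemma lin_jet_point: "lin (jet_point k l t) x = (\<Sum>s<k. lin (l s) x * t ^ s)"
  by (cases x) (simp add: jet_point_def lin_def case_prod_unfold sum_distrib_left sum_distrib_right
      sum.distrib algebra_simps)

lemma poly_jet_power:
  "poly ((\<Sum>s<k. monom (lin (l s) x) s) ^ d) t = lin (jet_point k l t) x ^ d"
  by (simp add: poly_power poly_sum poly_monom lin_jet_point)

lemma degree_jet_power:
  "degree ((\<Sum>s<k. monom (lin (l s) x) s) ^ d) \<le> (k - 1) * d"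
proof -
  have "degree (\<Sum>s<k. monom (lin (l s) x) s) \<le> k - 1"
    by (rule degree_sum_le) (auto intro: order.trans[OF degree_monom_le])
  then show ?thesis
    by (rule order.trans[OF degree_power_le mult_le_mono1])
qed

lemma distinct_roots_shifted_power:
  fixes b r :: complex
  assumes "D > 0" "r \<noteq> 0"
  obtains t where "inj_on t {..<D}" "\<And>i. i < D \<Longrightarrow> poly ([:-b, 1:] ^ D - [:r ^ D:]) (t i) = 0"
proof
  define \<omega> where "\<omega> i = cis (2 * pi * real i / real D)" for i
  have roots_unity: "bij_betw \<omega> {..<D} {z. z ^ D = 1}"
    unfolding \<omega>_def by (rule bij_betw_roots_unity[OF assms(1)])
  show "inj_on (\<lambda>i. b + r * \<omega> i) {..<D}"
    using bij_betw_imp_inj_on[OF roots_unity] assms(2) by (auto simp: inj_on_def)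
  show "poly ([:-b, 1:] ^ D - [:r ^ D:]) (b + r * \<omega> i) = 0" if "i < D" for i
    using bij_betw_imp_surj_on[OF roots_unity] that by (auto simp: poly_power power_mult_distrib)
qed

lemma shifted_power_annihilated:
  fixes c :: "nat \<Rightarrow> complex"
  assumes "1 \<le> k" "k \<le> D"
  obtains b r where "r \<noteq> 0" "(\<Sum>j<k. c j * coeff ([:-b, 1:] ^ D - [:r ^ D:]) j) = 0"
proof (cases "c 0 = 0")
  case True
  have "c j * coeff ([:-0, 1:] ^ D - [:1 ^ D:]) j = 0" if "j < k" for j
    using True that assms by (auto simp: coeff_linear_poly_power coeff_pCons split: nat.split)
  then show ?thesis
    by (intro that[of 1 0] sum.neutral) auto
next
  case False
  obtain k' where k': "k = Suc k'"
    using assms(1) by (cases k) auto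
  define phi_shift where "phi_shift = (\<Sum>j<k. smult (c j * of_nat (D choose j)) ([:0, -1:] ^ (D - j)))"
  have poly_phi_shift: "poly phi_shift b = (\<Sum>j<k. c j * coeff ([:-b, 1:] ^ D) j)" for b
    unfolding phi_shift_def poly_sum
    by (intro sum.cong) (use assms in \<open>auto simp: coeff_linear_poly_power poly_power\<close>)
  have vanish: "coeff ([:0, -1:] ^ (D - j)) D = 0" if "0 < j" for j
    using that assms by (intro coeff_eq_0 le_less_trans[OF degree_power_le]) auto
  have "coeff phi_shift D = c 0 * (-1) ^ D"
    unfolding phi_shift_def coeff_sum k' by (simp add: vanish sum.lessThan_Suc_shift del: sum.lessThan_Suc)
  then obtain b where b: "poly phi_shift b \<noteq> 0"
    using False poly_all_0_iff_0[of phi_shift] by auto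
  obtain r where r: "r ^ D = poly phi_shift b / c 0"
    using nth_root_exists[of D "poly phi_shift b / c 0"] assms by auto
  have "r \<noteq> 0"
    using r b False assms by (auto simp: power_0_left)
  moreover have "(\<Sum>j<k. c j * coeff [:r ^ D:] j) = c 0 * r ^ D"
    unfolding k' by (simp add: sum.lessThan_Suc_shift del: sum.lessThan_Suc)
  ultimately show ?thesis
    using that[of r b] r False poly_phi_shift
    by (simp add: right_diff_distrib sum_subtractf)
qed

lemma jet_combination_has_waring_decomposition:
  assumes "d \<ge> 1" "1 \<le> k" "k \<le> D" "(k - 1) * d \<le> D"
  shows "has_waring_decomposition d D (\<lambda>x. \<Sum>j<k. c j * jet_form d k l j x)"
proof -
  obtain b r where "r \<noteq> 0" and annihilated: "(\<Sum>j<k. c j * coeff ([:-b, 1:] ^ D - [:r ^ D:]) j) = 0"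
    using shifted_power_annihilated assms(2,3) by blast
  define q where "q = [:-b, 1:] ^ D - [:r ^ D:]"
  obtain t where inj: "inj_on t {..<D}" and roots: "\<And>i. i < D \<Longrightarrow> poly q (t i) = 0"
    using distinct_roots_shifted_power[of D r b] \<open>r \<noteq> 0\<close> assms(2,3) unfolding q_def by auto
  have "D > 0"
    using assms(2,3) by simp
  have degree_q: "degree q \<le> D"
    unfolding q_def by (intro degree_diff_le order.trans[OF degree_power_le]) auto
  have coeff_q: "coeff q D = 1"
    using \<open>D > 0\<close> by (simp add: q_def coeff_linear_power coeff_pCons split: nat.split)
  define w where "w i = (\<Sum>j<k. c j * coeff (lagrange_basis t D i) j)" for i
  have "(\<Sum>j<k. c j * jet_form d k l j x) = (\<Sum>i<D. w i * lin (jet_point k l (t i)) x ^ d)" for x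
  proof -
    define g where "g = (\<Sum>s<k. monom (lin (l s) x) s) ^ d"
    have "degree g \<le> D"
      unfolding g_def using degree_jet_power assms(4) order.trans by blast
    then have interpolation:
      "g = smult (coeff g D) q + (\<Sum>i<D. smult (poly g (t i)) (lagrange_basis t D i))"
      by (rule lagrange_interpolation_modulo[OF inj _ degree_q coeff_q roots])
    define lc where "lc = coeff g D"
    have coeff_g: "coeff g j = lc * coeff q j + (\<Sum>i<D. poly g (t i) * coeff (lagrange_basis t D i) j)"
      for j
      using arg_cong[OF interpolation, of "\<lambda>p. coeff p j"] by (simp add: coeff_sum lc_def)
    have "(\<Sum>j<k. c j * coeff g j)
        = lc * (\<Sum>j<k. c j * coeff q j) + (\<Sum>j<k. \<Sum>i<D. c j * coeff (lagrange_basis t D i) j * poly g (t i))"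
      unfolding coeff_g by (simp add: algebra_simps sum.distrib sum_distrib_left)
    also have "\<dots> = (\<Sum>i<D. w i * poly g (t i))"
      unfolding annihilated[folded q_def] w_def sum_distrib_right by (simp add: sum.swap[of _ "{..<k}"])
    finally show ?thesis
      unfolding jet_form_def g_def poly_jet_power .
  qed
  then show ?thesis
    using has_waring_decomposition_linear_combination[OF assms(1), of D w] by presburger
qed

lemma monomial_as_combination_of_powers:
  assumes "i + j \<le> N"
  obtains w :: "nat \<Rightarrow> complex"
  where "\<And>x y. x ^ i * y ^ j = (\<Sum>s\<le>N. w s * (x + of_nat s * y) ^ (i + j))"
proof -
  define L where "L = lagrange_basis (\<lambda>s. of_nat s :: complex) (Suc N)"
  have inj: "inj_on (\<lambda>s. of_nat s :: complex) {..<Suc N}"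
    by (simp add: inj_on_def)
  have "x ^ i * y ^ j = (\<Sum>s\<le>N. coeff (L s) j / of_nat ((i + j) choose j) * (x + of_nat s * y) ^ (i + j))"
    for x y :: complex
  proof -
    have "degree ([:x, y:] ^ (i + j)) < Suc N"
      using degree_power_le[of "[:x, y:]" "i + j"] assms by (simp add: degree_pCons_eq_if split: if_splits)
    note interpolation = lagrange_interpolation[OF inj this, folded L_def]
    have "coeff ([:x, y:] ^ (i + j)) j = (\<Sum>s<Suc N. (x + of_nat s * y) ^ (i + j) * coeff (L s) j)"
      by (subst interpolation) (simp add: coeff_sum poly_power algebra_simps)
    then have "of_nat ((i + j) choose j) * (x ^ i * y ^ j) = (\<Sum>s\<le>N. coeff (L s) j * (x + of_nat s * y) ^ (i + j))"
      by (simp add: coeff_linear_poly_power lessThan_Suc_atMost mult_ac)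
    moreover have "(of_nat ((i + j) choose j) :: complex) \<noteq> 0"
      by simp
    ultimately show ?thesis
      by (simp add: sum_divide_distrib[symmetric] field_simps)
  qed
  then show thesis
    by (rule that)
qed

definition grid_point :: "nat \<Rightarrow> nat \<Rightarrow> vec3" where
  "grid_point s u = (1, of_nat s, of_nat u)"

definition in_grid_power_span :: "nat \<Rightarrow> (vec3 \<Rightarrow> complex) \<Rightarrow> bool" where
  "in_grid_power_span d F \<longleftrightarrow>
     (\<exists>C. F = (\<lambda>x. \<Sum>s\<le>d. \<Sum>u\<le>d. C s u * lin (grid_point s u) x ^ d))"

lemma in_grid_power_span_add:
  assumes "in_grid_power_span d F" "in_grid_power_span d G"
  shows "in_grid_power_span d (\<lambda>x. F x + G x)"
proof -
  obtain C C' where "F = (\<lambda>x. \<Sum>s\<le>d. \<Sum>u\<le>d. C s u * lin (grid_point s u) x ^ d)"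
    and "G = (\<lambda>x. \<Sum>s\<le>d. \<Sum>u\<le>d. C' s u * lin (grid_point s u) x ^ d)"
    using assms unfolding in_grid_power_span_def by blast
  then show ?thesis
    unfolding in_grid_power_span_def
    by (intro exI[of _ "\<lambda>s u. C s u + C' s u"]) (simp add: sum.distrib distrib_right)
qed

lemma in_grid_power_span_scale:
  assumes "in_grid_power_span d F"
  shows "in_grid_power_span d (\<lambda>x. a * F x)"
proof -
  obtain C where "F = (\<lambda>x. \<Sum>s\<le>d. \<Sum>u\<le>d. C s u * lin (grid_point s u) x ^ d)"
    using assms unfolding in_grid_power_span_def by blast
  then show ?thesis
    unfolding in_grid_power_span_def
    by (intro exI[of _ "\<lambda>s u. a * C s u"]) (simp add: sum_distrib_left mult.assoc)
qed

lemma in_grid_power_span_sum: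
  assumes "finite A" "\<And>i. i \<in> A \<Longrightarrow> in_grid_power_span d (F i)"
  shows "in_grid_power_span d (\<lambda>x. \<Sum>i\<in>A. F i x)"
  using assms
proof (induction A rule: finite_induct)
  case empty
  then show ?case
    unfolding in_grid_power_span_def by (intro exI[of _ "\<lambda>_ _. 0"]) simp
next
  case (insert i A)
  then show ?case
    by (simp add: in_grid_power_span_add)
qed

lemma monomial_in_grid_power_span:
  assumes "a + b \<le> d"
  shows "in_grid_power_span d (\<lambda>(x0, x1, x2). x0 ^ a * x1 ^ b * x2 ^ (d - a - b))"
proof -
  obtain e where d: "d = a + b + e"
    using assms le_Suc_ex by blast
  obtain w1 where w1: "\<And>x y :: complex. x ^ a * y ^ e = (\<Sum>u\<le>d. w1 u * (x + of_nat u * y) ^ (a + e))"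
    using monomial_as_combination_of_powers[of a e d] d by auto
  obtain w2 where w2: "\<And>x y :: complex. x ^ (a + e) * y ^ b = (\<Sum>s\<le>d. w2 s * (x + of_nat s * y) ^ (a + e + b))"
    using monomial_as_combination_of_powers[of "a + e" b d] d by auto
  have "x0 ^ a * x1 ^ b * x2 ^ (d - a - b)
      = (\<Sum>s\<le>d. \<Sum>u\<le>d. w1 u * w2 s * lin (grid_point s u) (x0, x1, x2) ^ d)" for x0 x1 x2
  proof -
    have "x0 ^ a * x1 ^ b * x2 ^ (d - a - b) = x1 ^ b * (x0 ^ a * x2 ^ e)"
      by (simp add: d)
    also have "\<dots> = (\<Sum>u\<le>d. w1 u * ((x0 + of_nat u * x2) ^ (a + e) * x1 ^ b))"
      unfolding w1 by (simp add: sum_distrib_left mult_ac)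
    also have "\<dots> = (\<Sum>u\<le>d. \<Sum>s\<le>d. w1 u * w2 s * lin (grid_point s u) (x0, x1, x2) ^ d)"
      unfolding w2 by (simp add: d sum_distrib_left grid_point_def lin_def algebra_simps)
    also have "\<dots> = (\<Sum>s\<le>d. \<Sum>u\<le>d. w1 u * w2 s * lin (grid_point s u) (x0, x1, x2) ^ d)"
      by (rule sum.swap)
    finally show ?thesis .
  qed
  then show ?thesis
    unfolding in_grid_power_span_def by (intro exI[of _ "\<lambda>s u. w1 u * w2 s"]) auto
qed

lemma ternary_form_in_grid_power_span:
  assumes "is_ternary_form d P"
  shows "in_grid_power_span d P"
proof -
  define S where "S = {(a, b). a + b \<le> d}"
  obtain c where c: "\<And>x0 x1 x2. P (x0, x1, x2) = (\<Sum>(a, b)\<in>S. c a b * x0 ^ a * x1 ^ b * x2 ^ (d - a - b))"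
    using assms unfolding is_ternary_form_def S_def by blast
  have "finite S"
    by (rule finite_subset[of _ "{..d} \<times> {..d}"]) (auto simp: S_def)
  define monomial :: "nat \<Rightarrow> nat \<Rightarrow> vec3 \<Rightarrow> complex" where "monomial a b = (\<lambda>(x0, x1, x2). x0 ^ a * x1 ^ b * x2 ^ (d - a - b))" for a b
  have "P = (\<lambda>x. \<Sum>(a, b)\<in>S. c a b * monomial a b x)"
    by (auto simp: c monomial_def mult.assoc case_prod_unfold)
  moreover have "in_grid_power_span d (monomial a b)" if "(a, b) \<in> S" for a b
    using monomial_in_grid_power_span that unfolding monomial_def S_def by auto
  then have "in_grid_power_span d (\<lambda>x. \<Sum>(a, b)\<in>S. c a b * monomial a b x)"
    using \<open>finite S\<close> by (intro in_grid_power_span_sum) (auto intro: in_grid_power_span_scale)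
  ultimately show ?thesis
    by simp
qed

lemma indep2_grid_point:
  assumes "(s, u) \<noteq> (s', u')"
  shows "indep2 (grid_point s u) (grid_point s' u')"
  unfolding indep2_def
proof (intro allI impI)
  fix a b :: complex
  assume "add3 (smul3 a (grid_point s u)) (smul3 b (grid_point s' u')) = (0, 0, 0)"
  then have "a + b = 0" "a * of_nat s + b * of_nat s' = 0" "a * of_nat u + b * of_nat u' = 0"
    by (simp_all add: grid_point_def add3_def smul3_def)
  moreover from this(1) have "b = -a"
    by (simp add: eq_neg_iff_add_eq_0 add.commute)
  ultimately have "a * (of_nat s - of_nat s') = 0" "a * (of_nat u - of_nat u') = 0"
    by (simp_all add: algebra_simps)
  then show "a = 0 \<and> b = 0"
    using assms \<open>b = -a\<close> by auto
qed

lemma jet_form_length_one: "jet_form d (Suc 0) l 0 x = lin (l 0) x ^ d"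
  by (simp add: jet_form_def monom_0 poly_const_pow)

lemma sum_lessThan_mult_mod_div:
  fixes F :: "nat \<Rightarrow> nat \<Rightarrow> 'a::comm_monoid_add"
  shows "(\<Sum>i<m * n. F (i mod n) (i div n)) = (\<Sum>s<n. \<Sum>u<m. F s u)"
proof -
  have "s + n * u < m * n" if "s < n" "u < m" for s u
  proof -
    have "s + n * u < n * Suc u"
      using that by simp
    also have "\<dots> \<le> n * m"
      using that by (intro mult_le_mono2) simp
    finally show ?thesis
      by (simp add: mult.commute)
  qed
  moreover have "i mod n < n" if "i < m * n" for i
    using that by (cases "n = 0") auto
  ultimately have "(\<Sum>i<m * n. F (i mod n) (i div n)) = (\<Sum>(s, u)\<in>{..<n} \<times> {..<m}. F s u)"
    by (intro sum.reindex_bij_witness[where i = "\<lambda>(s, u). s + n * u" and j = "\<lambda>i. (i mod n, i div n)"])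
       (auto simp: less_mult_imp_div_less)
  then show ?thesis
    by (simp add: sum.cartesian_product)
qed

lemma curvilinear_rank_attained:
  assumes "is_ternary_form d P"
  obtains m :: nat and ks l c where "\<forall>i<m. ks i \<ge> 1" "curvilinear_rank d P = (\<Sum>i<m. ks i)"
    "P = (\<lambda>x. \<Sum>i<m. \<Sum>j<ks i. c i j * jet_form d (ks i) (l i) j x)"
proof -
  obtain C where C: "P = (\<lambda>x. \<Sum>s\<le>d. \<Sum>u\<le>d. C s u * lin (grid_point s u) x ^ d)"
    using ternary_form_in_grid_power_span[OF assms] unfolding in_grid_power_span_def by blast
  define N where "N = Suc d"
  define l :: "nat \<Rightarrow> nat \<Rightarrow> vec3" where "l i = (\<lambda>_. grid_point (i mod N) (i div N))" for i
  define c :: "nat \<Rightarrow> nat \<Rightarrow> complex" where "c i = (\<lambda>_. C (i mod N) (i div N))" for i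
  have reduced: "P = (\<lambda>x. \<Sum>i<N * N. \<Sum>j<1. c i j * jet_form d 1 (l i) j x)"
  proof
    fix x
    have "(\<Sum>i<N * N. \<Sum>j<1. c i j * jet_form d 1 (l i) j x)
        = (\<Sum>i<N * N. C (i mod N) (i div N) * lin (grid_point (i mod N) (i div N)) x ^ d)"
      by (simp add: c_def l_def jet_form_length_one)
    also have "\<dots> = (\<Sum>s<N. \<Sum>u<N. C s u * lin (grid_point s u) x ^ d)"
      by (rule sum_lessThan_mult_mod_div)
    finally show "P x = (\<Sum>i<N * N. \<Sum>j<1. c i j * jet_form d 1 (l i) j x)"
      unfolding C N_def lessThan_Suc_atMost by simp
  qed
  have "indep2 (l i 0) (l i' 0)" if "i \<noteq> i'" for i i'
    unfolding l_def by (rule indep2_grid_point) (metis div_mult_mod_eq prod.inject that)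
  then have "\<exists>n m (ks :: nat \<Rightarrow> nat) (l :: nat \<Rightarrow> nat \<Rightarrow> vec3) (c :: nat \<Rightarrow> nat \<Rightarrow> complex).
     (\<forall>i<m. ks i \<ge> 1 \<and> l i 0 \<noteq> (0,0,0) \<and> (ks i \<ge> 2 \<longrightarrow> indep2 (l i 0) (l i 1))) \<and>
     (\<forall>i<m. \<forall>i'<m. i \<noteq> i' \<longrightarrow> indep2 (l i 0) (l i' 0)) \<and>
     n = (\<Sum>i<m. ks i) \<and>
     P = (\<lambda>x. \<Sum>i<m. \<Sum>j<ks i. c i j * jet_form d (ks i) (l i) j x)"
    using reduced by (intro exI[of _ "N * N"] exI[of _ "\<lambda>_. 1"] exI[of _ l] exI[of _ c] exI)
      (auto simp: l_def grid_point_def)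
  from LeastI_ex[OF this, folded curvilinear_rank_def] show thesis
    using that by blast
qed

definition jet_waring_bound :: "nat \<Rightarrow> nat \<Rightarrow> nat" where
  "jet_waring_bound d k = (if k = 1 then 1 else (k - 1) * d)"

lemma jet_combination_waring_bound:
  assumes "d \<ge> 2" "k \<ge> 1"
  shows "has_waring_decomposition d (jet_waring_bound d k) (\<lambda>x. \<Sum>j<k. c j * jet_form d k l j x)"
proof (rule jet_combination_has_waring_decomposition)
  show "k \<le> jet_waring_bound d k"
  proof (cases "k = 1")
    case False
    then have "k \<le> (k - 1) * 2"
      using assms(2) by linarith
    also have "\<dots> \<le> (k - 1) * d"
      using assms(1) by (rule mult_le_mono2)
    finally show ?thesis
      using False by (simp add: jet_waring_bound_def)
  qed (simp add: jet_waring_bound_def)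
qed (use assms in \<open>auto simp: jet_waring_bound_def\<close>)

lemma sum_jet_waring_bound_le:
  fixes ks :: "nat \<Rightarrow> nat"
  assumes "d \<ge> 2" "\<forall>i<m. ks i \<ge> 1" "(\<Sum>i<m. ks i) \<ge> 2"
  shows "(\<Sum>i<m. jet_waring_bound d (ks i)) \<le> ((\<Sum>i<m. ks i) - 1) * d"
proof (cases "m \<ge> 2")
  case True
  have "jet_waring_bound d (ks i) + d \<le> ks i * d + 1" if "i < m" for i
    using assms(2) that by (cases "ks i") (auto simp: jet_waring_bound_def)
  then have "(\<Sum>i<m. jet_waring_bound d (ks i) + d) \<le> (\<Sum>i<m. ks i * d + 1)"
    by (intro sum_mono) auto
  then have "(\<Sum>i<m. jet_waring_bound d (ks i)) + m * d \<le> (\<Sum>i<m. ks i) * d + m"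
    unfolding sum.distrib sum_distrib_right by simp
  moreover have "m * 2 \<le> m * d" "2 * d \<le> m * d"
    using True assms(1) by (simp_all add: mult_le_mono)
  ultimately have "(\<Sum>i<m. jet_waring_bound d (ks i)) + d \<le> (\<Sum>i<m. ks i) * d"
    by linarith
  then show ?thesis
    by (simp add: diff_mult_distrib)
next
  case False
  moreover have "m \<noteq> 0"
    using assms(3) by (intro notI) simp
  ultimately have "m = 1"
    by simp
  then show ?thesis
    using assms(3) by (simp add: jet_waring_bound_def)
qed

theorem proposition1:
  fixes d :: nat and P :: "vec3 \<Rightarrow> complex"
  assumes "d \<ge> 2" and "is_ternary_form d P" and "curvilinear_rank d P \<ge> 2"
  shows "waring_rank d P \<le> (curvilinear_rank d P - 1) * d"
proof -
  obtain m :: nat and ks l c where ks: "\<forall>i<m. ks i \<ge> 1"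
    and rank: "curvilinear_rank d P = (\<Sum>i<m. ks i)"
    and P: "P = (\<lambda>x. \<Sum>i<m. \<Sum>j<ks i. c i j * jet_form d (ks i) (l i) j x)"
    by (rule curvilinear_rank_attained[OF assms(2)])
  have "has_waring_decomposition d (\<Sum>i<m. jet_waring_bound d (ks i)) P"
    unfolding P using assms(1) ks by (intro has_waring_decomposition_sum jet_combination_waring_bound) auto
  then have "waring_rank d P \<le> (\<Sum>i<m. jet_waring_bound d (ks i))"
    by (rule waring_rank_le)
  also have "\<dots> \<le> (curvilinear_rank d P - 1) * d"
    unfolding rank using sum_jet_waring_bound_le assms(1,3) ks rank by simp
  finally show ?thesis .
qed

end
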